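(* For $n\ge 0$, the $(n+1)\times(n+1)$ Hankel matrix $M_n=\left[\binom{i+j}{n}\right]_{0\le i,j\le n}$ is invertible, with inverse $$M_n^{-1}=\left[(-1)^{n-i-j}\binom{n+1}{i+j+1}\right]_{0\le i,j\le n}.$$
   Context: Binomial coefficients $\binom{a}{b}$ with integers $a\ge0$ are taken to be $0$ when $b>a$ or $b<0$. *)

theory Defs
  imports Complex_Main "Jordan_Normal_Form.Matrix"
begin

definition hankel_binom :: "nat \<Rightarrow> rat mat" where
  "hankel_binom n = mat (n+1) (n+1) (\<lambda>(i,j). of_nat ((i+j) choose n))"

definition hankel_binom_inv :: "nat \<Rightarrow> rat mat" where
  "hankel_binom_inv n = mat (n+1) (n+1)
     (\<lambda>(i,j). (-1) powi (int n - int i - int j) * of_nat ((n+1) choose (i+j+1)))"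

end

theory Submission
  imports Defs "Jordan_Normal_Form.Determinant"
begin

text \<open>
  The sum \<open>\<Sum>m\<le>N. (-1)^m \<cdot> (N choose m) \<cdot> f m\<close> is, up to the sign \<open>(-1)^N\<close>, the \<open>N\<close>-th
  forward difference of \<open>f\<close> at \<open>0\<close>. Since \<open>m \<mapsto> (a + m) choose n\<close> is a polynomial of
  degree \<open>n\<close> in \<open>m\<close>, its differences of order \<open>N > n\<close> vanish.
  In entry \<open>(i, j)\<close> of \<open>M\<^sub>n\<close> times the claimed inverse, the substitution \<open>m = k + j + 1\<close>
  turns the sum over \<open>k\<close> into such a difference of order \<open>n + 1\<close> when \<open>i > j\<close>; when
  \<open>i \<le> j\<close> the supports of the two binomials meet only if \<open>i = j\<close>, in the single term
  \<open>k = n - i\<close>. The other product is then the identity because the matrices are square.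
\<close>

definition alt_binomial_sum :: "nat \<Rightarrow> (nat \<Rightarrow> 'a::comm_ring_1) \<Rightarrow> 'a" where
  "alt_binomial_sum N f = (\<Sum>m\<le>N. (-1)^m * of_nat (N choose m) * f m)"

lemma alt_binomial_sum_eq_sum_atMost:
  assumes "N \<le> K"
  shows "alt_binomial_sum N f = (\<Sum>m\<le>K. (-1)^m * of_nat (N choose m) * f m)"
  unfolding alt_binomial_sum_def
proof (rule sum.mono_neutral_left)
  show "\<forall>m\<in>{..K} - {..N}. (-1)^m * of_nat (N choose m) * f m = 0"
    by (auto simp: binomial_eq_0)
qed (use assms in auto)

lemma alt_binomial_sum_Suc:
  "alt_binomial_sum (Suc N) f = alt_binomial_sum N (\<lambda>m. f m - f (Suc m))"
proof -
  define g where "g m = (-1)^m * of_nat (N choose m) * f m" for m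
  have "alt_binomial_sum (Suc N) f
      = f 0 + (\<Sum>m\<le>N. (-1)^(Suc m) * of_nat (Suc N choose Suc m) * f (Suc m))"
    unfolding alt_binomial_sum_def by (subst sum.atMost_Suc_shift) simp
  also have "\<dots> = f 0 + (\<Sum>m\<le>N. g (Suc m)) - (\<Sum>m\<le>N. (-1)^m * of_nat (N choose m) * f (Suc m))"
    by (simp add: g_def sum.distrib sum_subtractf algebra_simps sum_negf)
  also have "(\<Sum>m\<le>N. g (Suc m)) = (\<Sum>m\<le>N. g m) - f 0"
  proof -
    have "(\<Sum>m\<le>Suc N. g m) = (\<Sum>m\<le>N. g m)"
      by (simp add: g_def binomial_eq_0)
    then show ?thesis
      using sum.atMost_Suc_shift[of g N] by (simp add: g_def)
  qed
  finally show ?thesis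
    by (simp add: alt_binomial_sum_def g_def sum_subtractf algebra_simps)
qed

lemma alt_binomial_sum_choose_eq_0:
  assumes "n < N"
  shows "alt_binomial_sum N (\<lambda>m. of_nat ((a + m) choose n)) = (0 :: 'a::comm_ring_1)"
  using assms
proof (induction N arbitrary: n a)
  case 0
  then show ?case by simp
next
  case (Suc N)
  show ?case
  proof (cases n)
    case 0
    then show ?thesis
      using choose_alternating_sum[of "Suc N", where ?'a = 'a]
      by (simp add: alt_binomial_sum_def mult.commute)
  next
    case (Suc n')
    have "alt_binomial_sum N (\<lambda>m. of_nat ((a + m) choose n) - of_nat ((a + Suc m) choose n))
        = - alt_binomial_sum N (\<lambda>m. of_nat ((a + m) choose n') :: 'a)"
      by (simp add: Suc alt_binomial_sum_def sum_negf[symmetric] algebra_simps)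
    then show ?thesis
      using Suc.IH[of n'] Suc.prems by (simp add: alt_binomial_sum_Suc \<open>n = Suc n'\<close>)
  qed
qed

lemma power_int_minus_one_diff_of_nat:
  "(-1 :: 'a::division_ring) powi (int a - int b) = (-1) ^ (a + b)"
  by (simp add: power_int_minus_left minus_one_power_iff)

lemma hankel_binom_orthogonality:
  assumes "i \<le> n" "j \<le> n"
  shows "(\<Sum>k\<le>n. of_nat ((i + k) choose n) * ((-1)^(n + k + j) * of_nat ((n + 1) choose (k + j + 1))))
    = (if i = j then 1 else 0 :: 'a::comm_ring_1)"
proof -
  define T :: "nat \<Rightarrow> 'a"
    where "T k = of_nat ((i + k) choose n) * ((-1)^(n + k + j) * of_nat ((n + 1) choose (k + j + 1)))" for k
  have T_eq_0: "T k = 0" if "k + i < n \<or> n < k + j" for k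
    using that by (auto simp: T_def binomial_eq_0)
  consider "i < j" | "i = j" | "j < i" by linarith
  then have "(\<Sum>k\<le>n. T k) = (if i = j then 1 else 0)"
  proof cases
    case 1
    then show ?thesis by (auto intro!: sum.neutral T_eq_0)
  next
    case 2
    have "(\<Sum>k\<le>n. T k) = T (n - i) + (\<Sum>k\<in>{..n} - {n - i}. T k)"
      by (rule sum.remove) auto
    also have "(\<Sum>k\<in>{..n} - {n - i}. T k) = 0"
      using 2 by (auto intro!: sum.neutral T_eq_0)
    also have "T (n - i) = 1"
      using 2 assms by (simp add: T_def neg_one_power_add_eq_neg_one_power_diff)
    finally show ?thesis using 2 by simp
  next
    case 3
    define a where "a = i - j - 1"
    define h :: "nat \<Rightarrow> 'a"
      where "h m = (-1)^m * of_nat ((n + 1) choose m) * of_nat ((a + m) choose n)" for m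
    have T_shift: "T k = (-1)^(n + 1) * h (k + Suc j)" for k
    proof -
      have index: "i + k = a + (k + Suc j)" "k + j + 1 = k + Suc j"
        using 3 by (simp_all add: a_def)
      have sign: "(-1::'a)^(n + k + j) = (-1)^(n + 1) * (-1)^(k + Suc j)"
        by (simp add: power_add)
      show ?thesis
        unfolding T_def h_def index sign by (simp only: mult_ac)
    qed
    have "(\<Sum>k\<le>n. T k) = (-1)^(n + 1) * (\<Sum>k\<le>n. h (k + Suc j))"
      by (simp only: T_shift sum_distrib_left)
    also have "(\<Sum>k\<le>n. h (k + Suc j)) = (\<Sum>m = Suc j..j + Suc n. h m)"
      using sum.shift_bounds_cl_nat_ivl[of h 0 "Suc j" n] by (simp add: atMost_atLeast0 add.commute)
    also have "\<dots> = (\<Sum>m\<le>j + Suc n. h m) - (\<Sum>m\<le>j. h m)"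
      by (simp add: sum_up_index_split)
    also have "(\<Sum>m\<le>j. h m) = 0"
      using 3 assms by (intro sum.neutral) (auto simp: h_def a_def binomial_eq_0)
    also have "(\<Sum>m\<le>j + Suc n. h m) = alt_binomial_sum (n + 1) (\<lambda>m. of_nat ((a + m) choose n))"
      unfolding h_def by (rule alt_binomial_sum_eq_sum_atMost [symmetric]) simp
    also have "\<dots> = 0"
      by (rule alt_binomial_sum_choose_eq_0) simp
    finally show ?thesis
      using 3 by simp
  qed
  then show ?thesis by (simp add: T_def)
qed

lemma hankel_binom_carrier_mat: "hankel_binom n \<in> carrier_mat (n + 1) (n + 1)"
  by (simp add: hankel_binom_def)

lemma hankel_binom_inv_carrier_mat: "hankel_binom_inv n \<in> carrier_mat (n + 1) (n + 1)"
  by (simp add: hankel_binom_inv_def)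

lemma hankel_binom_mult_inv: "hankel_binom n * hankel_binom_inv n = 1\<^sub>m (n + 1)"
proof (rule eq_matI)
  fix i j
  assume "i < dim_row (1\<^sub>m (n + 1) :: rat mat)" "j < dim_col (1\<^sub>m (n + 1) :: rat mat)"
  then have "i \<le> n" "j \<le> n" by auto
  have sign: "(-1 :: rat) powi (int n - int k - int j) = (-1)^(n + k + j)" for k
    using power_int_minus_one_diff_of_nat [of n "k + j"] by (simp add: algebra_simps)
  have "(hankel_binom n * hankel_binom_inv n) $$ (i, j)
      = (\<Sum>k\<le>n. of_nat ((i + k) choose n) * ((-1)^(n + k + j) * of_nat ((n + 1) choose (k + j + 1))))"
    using \<open>i \<le> n\<close> \<open>j \<le> n\<close>
    by (simp add: hankel_binom_def hankel_binom_inv_def scalar_prod_def atLeast0LessThan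
        lessThan_Suc_atMost sign)
  also have "\<dots> = 1\<^sub>m (n + 1) $$ (i, j)"
    unfolding hankel_binom_orthogonality [OF \<open>i \<le> n\<close> \<open>j \<le> n\<close>]
    using \<open>i \<le> n\<close> \<open>j \<le> n\<close> by simp
  finally show "(hankel_binom n * hankel_binom_inv n) $$ (i, j) = 1\<^sub>m (n + 1) $$ (i, j)" .
qed (simp_all add: hankel_binom_def hankel_binom_inv_def)

theorem lemma3p2:
  fixes n :: nat
  shows "invertible_mat (hankel_binom n)
    \<and> inverts_mat (hankel_binom n) (hankel_binom_inv n)
    \<and> inverts_mat (hankel_binom_inv n) (hankel_binom n)"
proof -
  have right: "hankel_binom n * hankel_binom_inv n = 1\<^sub>m (n + 1)"
    by (rule hankel_binom_mult_inv)
  have left: "hankel_binom_inv n * hankel_binom n = 1\<^sub>m (n + 1)"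
    by (rule mat_mult_left_right_inverse [OF hankel_binom_carrier_mat hankel_binom_inv_carrier_mat right])
  show ?thesis
    using left right hankel_binom_carrier_mat [of n] hankel_binom_inv_carrier_mat [of n]
    unfolding invertible_mat_def inverts_mat_def by auto
qed

end
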